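(* Let $F$ be a $\Theta$-graph of order $\ell$ (so $\ell\ge 4$), and let $t$ be an odd integer with $1\le t<\ell$. Let $A\cup B$ be a partition of $V(F)$ with $A\ne\emptyset$ such that every path of length $t$ in $F$ that starts at a vertex of $A$ ends at a vertex of $A$. Then $A=V(F)$.
   Context: A $\Theta$-graph of order $\ell$ ($\ell\ge 4$) is a cycle of length $\ell$ together with one chord (an additional edge joining two non-consecutive vertices of the cycle), on exactly $\ell$ vertices. A path of length $t$ is a path with $t$ edges (and $t+1$ distinct vertices). *)

theory Defs
  imports Main
begin

text \<open>Simple graphs are given by a vertex set V and an edge relation E
(we only use E on vertices of V).\<close>

definition cycle_edge :: "'a list \<Rightarrow> 'a \<Rightarrow> 'a \<Rightarrow> bool" where
  "cycle_edge cyc x y \<longleftrightarrow>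
     (\<exists>i<length cyc. (x = cyc ! i \<and> y = cyc ! ((i + 1) mod length cyc)) \<or>
                     (y = cyc ! i \<and> x = cyc ! ((i + 1) mod length cyc)))"

definition theta_graph :: "'a set \<Rightarrow> ('a \<Rightarrow> 'a \<Rightarrow> bool) \<Rightarrow> nat \<Rightarrow> bool" where
  "theta_graph V E l \<longleftrightarrow> l \<ge> 4 \<and>
     (\<exists>cyc i j. length cyc = l \<and> distinct cyc \<and> set cyc = V \<and>
        i < j \<and> j < l \<and> j \<noteq> i + 1 \<and> \<not> (i = 0 \<and> j = l - 1) \<and>
        (\<forall>x y. E x y \<longleftrightarrow> cycle_edge cyc x y \<or>
                     (x = cyc ! i \<and> y = cyc ! j) \<or> (x = cyc ! j \<and> y = cyc ! i)))"

definition is_path :: "'a set \<Rightarrow> ('a \<Rightarrow> 'a \<Rightarrow> bool) \<Rightarrow> 'a list \<Rightarrow> nat \<Rightarrow> bool" where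
  "is_path V E p t \<longleftrightarrow> length p = t + 1 \<and> distinct p \<and> set p \<subseteq> V \<and>
     (\<forall>k < t. E (p ! k) (p ! (k + 1)))"

end

theory Submission
  imports Defs
begin

text \<open>Read the vertices of the cycle at integer positions modulo \<open>l\<close>, with the chord joining
  positions \<open>0\<close> and \<open>c\<close>, and let \<open>f y\<close> say whether position \<open>y\<close> lies in \<open>A\<close>. Paths may be
  reversed, so the two ends of every path of length \<open>t\<close> are both in \<open>A\<close> or both outside.
  Arcs of the cycle make \<open>f\<close> \<open>t\<close>-periodic (and it is \<open>l\<close>-periodic); the four kinds of
  \<open>t\<close>-paths through the chord make \<open>f\<close> invariant, on a whole window of some period, under
  translations by \<open>c + 1 - t\<close> and \<open>c + t - 1\<close> or reflections in \<open>c + t - 1\<close> and \<open>c - t + 1\<close>.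
  Two such symmetries together with period \<open>t\<close> give period \<open>2\<close>, hence period \<open>1\<close> as \<open>t\<close> is
  odd. So \<open>f\<close> is constant, and as \<open>A\<close> is nonempty it contains every vertex.\<close>

definition is_period :: "(int \<Rightarrow> 'b) \<Rightarrow> int \<Rightarrow> bool" where
  "is_period f k \<longleftrightarrow> (\<forall>x. f (x + k) = f x)"

lemma is_periodD: "is_period f k \<Longrightarrow> f (x + k) = f x"
  unfolding is_period_def by blast

lemma is_period_add: "is_period f a \<Longrightarrow> is_period f b \<Longrightarrow> is_period f (a + b)"
  unfolding is_period_def by (metis add.assoc)

lemma is_period_uminus: "is_period f k \<Longrightarrow> is_period f (- k)"
  unfolding is_period_def by (metis diff_add_cancel diff_minus_eq_add minus_minus)

lemma is_period_diff: "is_period f a \<Longrightarrow> is_period f b \<Longrightarrow> is_period f (a - b)"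
  using is_period_add is_period_uminus by fastforce

lemma is_period_mult: "is_period f k \<Longrightarrow> is_period f (n * k)"
proof (induction n rule: int_induct[where k = 0])
  case base
  then show ?case by (simp add: is_period_def)
next
  case (step1 n)
  then show ?case using is_period_add[of f "n * k" k] by (simp add: distrib_right)
next
  case (step2 n)
  then show ?case using is_period_diff[of f "n * k" k] by (simp add: left_diff_distrib)
qed

lemma is_period_1_iff: "is_period f 1 \<longleftrightarrow> (\<forall>x y. f x = f y)"
proof
  assume "is_period f 1"
  then have "f (x + (y - x) * 1) = f x" for x y by (metis is_periodD is_period_mult)
  then show "\<forall>x y. f x = f y" by simp
qed (simp add: is_period_def)

lemma is_period_1_of_odd:
  assumes "odd t" "is_period f t" "is_period f (2 * t - 2)"
  shows "is_period f 1"
proof -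
  obtain q where t: "t = 2 * q + 1" using \<open>odd t\<close> by (metis oddE)
  have "is_period f 2"
    using is_period_diff[OF is_period_mult[OF assms(2), of 2] assms(3)] by simp
  then have "is_period f (t - q * 2)" using is_period_diff[OF assms(2) is_period_mult] by blast
  then show ?thesis using t by simp
qed

lemma is_period_window:
  fixes P :: "int \<Rightarrow> bool"
  assumes "is_period P p" "0 < p" "\<And>x. s \<le> x \<Longrightarrow> x < s + p \<Longrightarrow> P x"
  shows "P x"
proof -
  have "P (s + (x - s) mod p + (x - s) div p * p) = P (s + (x - s) mod p)"
    using is_periodD[OF is_period_mult[OF assms(1)]] .
  then show ?thesis using assms(2,3) by simp
qed

lemma is_period_of_window:
  assumes "is_period f p" "0 < p" "\<And>x. s \<le> x \<Longrightarrow> x < s + p \<Longrightarrow> f (x + k) = f x"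
  shows "is_period f k"
  unfolding is_period_def
proof
  fix x
  have "f (y + p + k) = f (y + k)" for y
    using is_periodD[OF assms(1), of "y + k"] by (simp add: ac_simps)
  then have "is_period (\<lambda>x. f (x + k) = f x) p"
    using is_periodD[OF assms(1)] unfolding is_period_def by simp
  then show "f (x + k) = f x" using is_period_window assms(2,3) by blast
qed

lemma reflection_of_window:
  assumes "is_period f p" "0 < p" "\<And>x. s \<le> x \<Longrightarrow> x < s + p \<Longrightarrow> f (k - x) = f x"
  shows "f (k - x) = f x"
proof -
  have "f (k - (y + p)) = f (k - y)" for y
    using is_periodD[OF assms(1), of "k - (y + p)"] by simp
  then have "is_period (\<lambda>x. f (k - x) = f x) p"
    using is_periodD[OF assms(1)] unfolding is_period_def by simp
  then show ?thesis using is_period_window assms(2,3) by blast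
qed

lemma is_period_of_reflections:
  assumes "\<And>x. f (a - x) = f x" "\<And>x. f (b - x) = f x"
  shows "is_period f (a - b)"
  unfolding is_period_def
proof
  fix x
  have "f (x + (a - b)) = f (a - (b - x))" by (simp add: algebra_simps)
  then show "f (x + (a - b)) = f x" using assms by simp
qed

lemma is_period_1_of_windowed_reflections:
  assumes "odd t" "is_period f t" "is_period f p" "0 < p"
    and "\<And>x. s \<le> x \<Longrightarrow> x < s + p \<Longrightarrow> f (c + t - 1 - x) = f x"
    and "\<And>x. s' \<le> x \<Longrightarrow> x < s' + p \<Longrightarrow> f (c - t + 1 - x) = f x"
  shows "is_period f 1"
proof -
  have "is_period f ((c + t - 1) - (c - t + 1))"
    using reflection_of_window[OF assms(3,4,5)] reflection_of_window[OF assms(3,4,6)]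
    by (rule is_period_of_reflections)
  then show ?thesis using is_period_1_of_odd[OF assms(1,2)] by (simp add: algebra_simps)
qed

text \<open>The four identities are those given by the paths of length \<open>t\<close> that run along the cycle
  down or up to the chord end \<open>0\<close>, cross the chord, and continue up or down from \<open>c\<close>; a
  path starting at \<open>x\<close> exists only while its two arcs stay disjoint.\<close>

lemma is_period_1_of_chord_identities:
  fixes f :: "int \<Rightarrow> 'b" and t l c :: int
  assumes "odd t" "0 < t" "t < l" "2 \<le> c" "c + 2 \<le> l"
    and per_t: "is_period f t" and per_l: "is_period f l"
    and down_up: "\<And>x. 0 \<le> x \<Longrightarrow> x < t \<Longrightarrow> x < c \<Longrightarrow> c + t - 1 - x < l \<Longrightarrow> f (c + t - 1 - x) = f x"
    and up_down: "\<And>x. x \<le> 0 \<Longrightarrow> - x < t \<Longrightarrow> t - 1 + x < c \<Longrightarrow> - x < l - c \<Longrightarrow> f (c - t + 1 - x) = f x"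
    and down_down: "\<And>x. t \<le> c \<Longrightarrow> 0 \<le> x \<Longrightarrow> x < t \<Longrightarrow> f (x + (c + 1 - t)) = f x"
    and up_up: "\<And>x. t + c \<le> l \<Longrightarrow> x \<le> 0 \<Longrightarrow> - x < t \<Longrightarrow> f (x + (c + t - 1)) = f x"
  shows "is_period f 1"
proof -
  have per_down_down: "is_period f (c + 1 - t)" if "t \<le> c"
    by (rule is_period_of_window[OF per_t \<open>0 < t\<close>, where s = 0]) (use down_down that in auto)
  have per_up_up: "is_period f (c + t - 1)" if "t + c \<le> l"
    by (rule is_period_of_window[OF per_t \<open>0 < t\<close>, where s = "1 - t"]) (use up_up that in auto)
  consider "t \<le> c" "t + c \<le> l" | "c < t" "l < t + c" | "t \<le> c" "l < t + c" | "c < t" "t + c \<le> l"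
    by linarith
  then show ?thesis
  proof cases
    case 1
    have "is_period f ((c + t - 1) - (c + 1 - t))"
      using per_up_up per_down_down 1 by (blast intro: is_period_diff)
    then show ?thesis using is_period_1_of_odd[OF \<open>odd t\<close> per_t] by (simp add: algebra_simps)
  next
    case 2
    show ?thesis
      by (rule is_period_1_of_windowed_reflections[OF \<open>odd t\<close> per_t is_period_diff[OF per_l per_t],
            where s = "t + c - l" and s' = "c + 1 - l"])
        (use assms 2 in \<open>auto intro: down_up up_down\<close>)
  next
    case 3
    have "is_period f (l - c - 1)"
      using is_period_diff[OF is_period_diff[OF per_l per_down_down] per_t] 3 by (simp add: algebra_simps)
    then show ?thesis
      by (rule is_period_1_of_windowed_reflections[OF \<open>odd t\<close> per_t, where c = c and s = "t + c - l" and s' = "c + 1 - l"])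
        (use assms 3 in \<open>auto intro: down_up up_down\<close>)
  next
    case 4
    have "is_period f (c - 1)"
      using is_period_diff[OF per_up_up per_t] 4 by (simp add: algebra_simps)
    then show ?thesis
      by (rule is_period_1_of_windowed_reflections[OF \<open>odd t\<close> per_t, where c = c and s = 0 and s' = "1 - t"])
        (use assms 4 in \<open>auto intro: down_up up_down\<close>)
  qed
qed

lemma mod_eq_imp_eq_on_window:
  fixes y z L :: int
  assumes "y mod L = z mod L" "s \<le> y" "y < s + L" "s \<le> z" "z < s + L"
  shows "y = z"
proof (rule ccontr)
  assume "y \<noteq> z"
  moreover have "L dvd y - z" using assms(1) by (simp add: mod_eq_dvd_iff)
  ultimately have "\<bar>L\<bar> \<le> \<bar>y - z\<bar>" by (intro dvd_imp_le_int) auto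
  then show False using assms(2-5) by linarith
qed

lemma hd_upto: "a \<le> b \<Longrightarrow> hd [a..b] = a"
  by (simp add: upto_rec1)

lemma last_upto: "a \<le> b \<Longrightarrow> last [a..b] = b"
  by (simp add: upto_rec2)

definition cyclic_nth :: "'a list \<Rightarrow> int \<Rightarrow> 'a" where
  "cyclic_nth xs y = xs ! nat (y mod int (length xs))"

lemma cyclic_nth_of_nat: "k < length xs \<Longrightarrow> cyclic_nth xs (int k) = xs ! k"
  by (simp add: cyclic_nth_def zmod_int)

lemma cyclic_nth_index:
  assumes "xs \<noteq> []"
  shows "cyclic_nth xs y = xs ! nat (y mod int (length xs))" "nat (y mod int (length xs)) < length xs"
  using assms by (simp_all add: cyclic_nth_def nat_less_iff)

lemma cyclic_nth_in_set: "xs \<noteq> [] \<Longrightarrow> cyclic_nth xs y \<in> set xs"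
  using cyclic_nth_index by (metis nth_mem)

lemma cyclic_nth_eq_iff:
  assumes "distinct xs" "xs \<noteq> []"
  shows "cyclic_nth xs y = cyclic_nth xs z \<longleftrightarrow> y mod int (length xs) = z mod int (length xs)"
  using cyclic_nth_index[OF assms(2)] assms
  by (simp add: nth_eq_iff_index_eq eq_nat_nat_iff)

lemma cycle_edge_commute: "cycle_edge xs x y = cycle_edge xs y x"
  unfolding cycle_edge_def by blast

lemma cycle_edge_cyclic_nth:
  assumes "xs \<noteq> []"
  shows "cycle_edge xs (cyclic_nth xs y) (cyclic_nth xs (y + 1))"
proof -
  let ?n = "int (length xs)" and ?k = "nat (y mod int (length xs))"
  have "int (nat ((y + 1) mod ?n)) = (y mod ?n + 1) mod ?n"
    using assms by (simp add: mod_add_left_eq)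
  also have "\<dots> = int ((?k + 1) mod length xs)"
    using assms by (simp add: zmod_int add.commute)
  finally have "nat ((y + 1) mod ?n) = (?k + 1) mod length xs" by linarith
  then show ?thesis
    unfolding cycle_edge_def using cyclic_nth_index[OF assms] by metis
qed

lemma is_path_rev:
  assumes "\<And>x y. E x y = E y x" "is_path V E p t"
  shows "is_path V E (rev p) t"
  unfolding is_path_def
proof (intro conjI allI impI)
  fix k assume "k < t"
  then have "E (p ! (t - k - 1)) (p ! (t - k - 1 + 1))"
    using assms(2) unfolding is_path_def by simp
  moreover have "t - k - 1 + 1 = t - k" using \<open>k < t\<close> by simp
  ultimately show "E (rev p ! k) (rev p ! (k + 1))"
    using assms \<open>k < t\<close> unfolding is_path_def by (simp add: rev_nth)
qed (use assms(2) in \<open>auto simp: is_path_def\<close>)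

locale theta_unrolling =
  fixes V :: "'a set" and E :: "'a \<Rightarrow> 'a \<Rightarrow> bool" and L C :: int and w :: "int \<Rightarrow> 'a"
  assumes chord_bounds: "2 \<le> C" "C + 2 \<le> L"
    and w_in_V: "w y \<in> V"
    and w_eq_iff: "w y = w z \<longleftrightarrow> y mod L = z mod L"
    and edge_succ: "E (w y) (w (y + 1))"
    and edge_chord: "E (w 0) (w C)"
    and edge_commute: "E u v = E v u"

lemma theta_graph_unrolling:
  assumes "theta_graph V E l"
  obtains C w where "theta_unrolling V E (int l) C w" "V \<subseteq> range w"
proof -
  obtain cyc i j where l: "l \<ge> 4" "length cyc = l" and cyc: "distinct cyc" "set cyc = V"
    and ij: "i < j" "j < l" "j \<noteq> i + 1" "\<not> (i = 0 \<and> j = l - 1)"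
    and E: "\<And>x y. E x y \<longleftrightarrow> cycle_edge cyc x y \<or>
                     (x = cyc ! i \<and> y = cyc ! j) \<or> (x = cyc ! j \<and> y = cyc ! i)"
    using assms unfolding theta_graph_def by blast
  define w where "w y = cyclic_nth cyc (y + int i)" for y
  have ne: "cyc \<noteq> []" using l by auto
  have "theta_unrolling V E (int l) (int j - int i) w"
  proof
    show "2 \<le> int j - int i" "int j - int i + 2 \<le> int l" using ij by auto
    show "w y \<in> V" for y unfolding w_def using cyclic_nth_in_set[OF ne] cyc by blast
    show "w y = w z \<longleftrightarrow> y mod int l = z mod int l" for y z
      unfolding w_def using cyclic_nth_eq_iff[OF cyc(1) ne] l by (simp add: mod_eq_dvd_iff)
    show "E (w y) (w (y + 1))" for y
      unfolding E w_def using cycle_edge_cyclic_nth[OF ne, of "y + int i"] by (simp add: add_ac)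
    have "w 0 = cyc ! i" "w (int j - int i) = cyc ! j"
      unfolding w_def using ij l by (simp_all add: cyclic_nth_of_nat)
    then show "E (w 0) (w (int j - int i))" unfolding E by simp
    show "E x y = E y x" for x y unfolding E using cycle_edge_commute[of cyc x y] by blast
  qed
  moreover have "V \<subseteq> range w"
  proof
    fix v assume "v \<in> V"
    then obtain k where "k < l" "v = cyc ! k" using cyc l by (metis in_set_conv_nth)
    then have "v = w (int k - int i)" unfolding w_def using l by (simp add: cyclic_nth_of_nat)
    then show "v \<in> range w" by simp
  qed
  ultimately show thesis using that by blast
qed

context theta_unrolling
begin

lemma w_add_L: "w (y + L) = w y"
  by (simp add: w_eq_iff)

lemma edge_chord_L: "E (w L) (w C)"
  using edge_chord w_add_L[of 0] by simp

lemma is_path_map_w: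
  assumes "length xs = t + 1" "distinct xs" "set xs \<subseteq> {s..<s + L}"
    and "successively (\<lambda>y z. E (w y) (w z)) xs"
  shows "is_path V E (map w xs) t"
  unfolding is_path_def
proof (intro conjI allI impI)
  have "inj_on w {s..<s + L}"
    by (intro inj_onI) (auto simp: w_eq_iff intro: mod_eq_imp_eq_on_window)
  then show "distinct (map w xs)" using assms(2,3) by (simp add: distinct_map inj_on_subset)
  fix k assume "k < t"
  then show "E (map w xs ! k) (map w xs ! (k + 1))"
    using assms(1) successively_nth[OF assms(4), of k] by simp
qed (use assms(1) w_in_V in auto)

lemma linked_upto: "successively (\<lambda>y z. E (w y) (w z)) [a..b]"
proof -
  have "successively (\<lambda>y z. z = y + 1) [a..b]" by (simp add: successively_conv_nth)
  then show ?thesis by (rule successively_mono) (auto simp: edge_succ)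
qed

lemma linked_rev_upto: "successively (\<lambda>y z. E (w y) (w z)) (rev [a..b])"
  using linked_upto by (simp add: edge_commute)

end

locale theta_unrolling_closed = theta_unrolling +
  fixes A :: "'a set" and t :: nat
  assumes path_closed: "is_path V E p t \<Longrightarrow> hd p \<in> A \<Longrightarrow> last p \<in> A"
begin

lemma hd_in_iff_last_in:
  assumes "is_path V E p t"
  shows "hd p \<in> A \<longleftrightarrow> last p \<in> A"
proof -
  have "p \<noteq> []" using assms by (auto simp: is_path_def)
  then show ?thesis
    using path_closed[OF assms] path_closed[OF is_path_rev[OF edge_commute assms]]
    by (auto simp: hd_rev last_rev)
qed

lemma linked_window_ends:
  assumes "length xs = t + 1" "distinct xs" "set xs \<subseteq> {s..<s + L}"
    and "successively (\<lambda>y z. E (w y) (w z)) xs"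
  shows "w (last xs) \<in> A \<longleftrightarrow> w (hd xs) \<in> A"
proof -
  have "xs \<noteq> []" using assms(1) by auto
  then show ?thesis using hd_in_iff_last_in[OF is_path_map_w[OF assms]]
    by (simp add: hd_map last_map)
qed

lemma is_period_t:
  assumes "int t < L"
  shows "is_period (\<lambda>y. w y \<in> A) (int t)"
  unfolding is_period_def
proof
  fix x
  have "w (last [x..x + int t]) \<in> A \<longleftrightarrow> w (hd [x..x + int t]) \<in> A"
    by (rule linked_window_ends[where s = x]) (use assms linked_upto in auto)
  then show "w (x + int t) \<in> A \<longleftrightarrow> w x \<in> A" by (simp add: hd_upto last_upto)
qed

lemma is_period_L: "is_period (\<lambda>y. w y \<in> A) L"
  by (simp add: is_period_def w_add_L)

lemmas linked_intros = linked_upto linked_rev_upto edge_chord edge_chord_L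

lemma chord_path_down_up:
  assumes "0 \<le> x" "x < int t" "x < C" "C + int t - 1 - x < L"
  shows "w (C + int t - 1 - x) \<in> A \<longleftrightarrow> w x \<in> A"
proof -
  let ?xs = "rev [0..x] @ [C..C + int t - 1 - x]"
  have "w (last ?xs) \<in> A \<longleftrightarrow> w (hd ?xs) \<in> A"
    by (rule linked_window_ends[where s = 0])
      (use assms chord_bounds linked_intros in \<open>auto simp: successively_append_iff last_rev hd_upto\<close>)
  then show ?thesis using assms by (simp add: hd_rev last_upto)
qed

lemma chord_path_up_down:
  assumes "x \<le> 0" "- x < int t" "int t - 1 + x < C" "- x < L - C"
  shows "w (C - int t + 1 - x) \<in> A \<longleftrightarrow> w x \<in> A"
proof -
  let ?xs = "[x + L..L] @ rev [C - int t + 1 - x..C]"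
  have "w (last ?xs) \<in> A \<longleftrightarrow> w (hd ?xs) \<in> A"
    by (rule linked_window_ends[where s = 1])
      (use assms chord_bounds linked_intros in \<open>auto simp: successively_append_iff hd_rev last_upto\<close>)
  then show ?thesis using assms by (simp add: last_rev hd_upto w_add_L)
qed

lemma chord_path_down_down:
  assumes "int t \<le> C" "0 \<le> x" "x < int t"
  shows "w (x + (C + 1 - int t)) \<in> A \<longleftrightarrow> w x \<in> A"
proof -
  let ?xs = "rev [0..x] @ rev [x + (C + 1 - int t)..C]"
  have "w (last ?xs) \<in> A \<longleftrightarrow> w (hd ?xs) \<in> A"
    by (rule linked_window_ends[where s = 0])
      (use assms chord_bounds linked_intros in \<open>auto simp: successively_append_iff last_rev hd_rev hd_upto last_upto\<close>)
  then show ?thesis using assms by (simp add: last_rev hd_rev hd_upto last_upto)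
qed

lemma chord_path_up_up:
  assumes "int t + C \<le> L" "x \<le> 0" "- x < int t"
  shows "w (x + (C + int t - 1)) \<in> A \<longleftrightarrow> w x \<in> A"
proof -
  let ?xs = "[x + L..L] @ [C..x + (C + int t - 1)]"
  have "w (last ?xs) \<in> A \<longleftrightarrow> w (hd ?xs) \<in> A"
    by (rule linked_window_ends[where s = C])
      (use assms chord_bounds linked_intros in \<open>auto simp: successively_append_iff hd_upto last_upto\<close>)
  then show ?thesis using assms by (simp add: hd_upto last_upto w_add_L)
qed

lemma membership_constant:
  assumes "odd t" "int t < L"
  shows "w y \<in> A \<longleftrightarrow> w z \<in> A"
proof -
  have "is_period (\<lambda>y. w y \<in> A) 1"
  proof (rule is_period_1_of_chord_identities[where t = "int t" and l = L and c = C])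
    show "odd (int t)" "0 < int t" using assms(1) by (auto simp: odd_pos)
  qed (use assms chord_bounds is_period_t is_period_L chord_path_down_up chord_path_up_down
         chord_path_down_down chord_path_up_up in auto)
  then show ?thesis by (simp add: is_period_1_iff)
qed

end

theorem corollary5p1:
  fixes V :: "'a set" and E :: "'a \<Rightarrow> 'a \<Rightarrow> bool" and l t :: nat and A B :: "'a set"
  assumes "theta_graph V E l"
    and "odd t" and "1 \<le> t" and "t < l"
    and "A \<union> B = V" and "A \<inter> B = {}" and "A \<noteq> {}"
    and "\<forall>p. is_path V E p t \<and> hd p \<in> A \<longrightarrow> last p \<in> A"
  shows "A = V"
proof -
  obtain C w where unrolling: "theta_unrolling V E (int l) C w" and V_range: "V \<subseteq> range w"
    using theta_graph_unrolling[OF assms(1)] .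
  interpret theta_unrolling_closed V E "int l" C w A t
    using unrolling assms(8) by (simp add: theta_unrolling_closed_def theta_unrolling_closed_axioms_def)
  obtain a where "a \<in> A" using assms(7) by blast
  then obtain y where "w y \<in> A" using assms(5) V_range by blast
  then have "w z \<in> A" for z using membership_constant[OF assms(2), of y z] assms(4) by simp
  then show ?thesis using assms(5) V_range by blast
qed

end
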